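(* Let $\{x^k\}$ be generated by Algorithm IRG with the backtracking stepsize rule, and assume $\rho_k\to0$. Suppose there is an infinite set $J\subset\mathbb N$ such that $x^k\to\bar x$ along $J$, and that $\nabla f$ is Lipschitz continuous on some neighborhood of $\bar x$. Then $\{t_k\}_{k\in J}$ is bounded away from zero, i.e. $\inf_{k\in J}t_k>0$.
   Context: Algorithm IRG (general inexact reduced gradient framework). Let $f:\mathbb R^n\to\mathbb R$ be continuously differentiable. Parameters: initial point $x^1\in\mathbb R^n$, initial radii $\varepsilon_1>0$, $r_1>0$, reduction factors $\mu,\theta\in(0,1)$, and a sequence $\{\rho_k\}$ of positive numbers. For $k=1,2,\dots$: (1) choose $g^k\in\mathbb R^n$ with $\|g^k-\nabla f(x^k)\|\le\min\{\varepsilon_k,\rho_k\}$; (2) if $\|g^k\|\le r_k+\varepsilon_k$, set $r_{k+1}=\mu r_k$, $\varepsilon_{k+1}=\theta\varepsilon_k$, $d^k=0$; otherwise set $r_{k+1}=r_k$, $\varepsilon_{k+1}=\varepsilon_k$ and $d^k=-\frac{\|g^k\|-\varepsilon_k}{\|g^k\|}g^k$; (3) choose a stepsize $t_k>0$ by some rule; (4) set $x^{k+1}=x^k+t_kd^k$. Backtracking stepsize rule: fix $\beta,\gamma,\tau\in(0,1)$; if $d^k=0$ set $t_k=\tau$; otherwise $t_k=\max\{t\in\{1,\gamma,\gamma^2,\dots\}: f(x^k+td^k)\le f(x^k)-\beta t\|d^k\|^2\}$. *)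

theory Defs
  imports "HOL-Analysis.Analysis"
begin

text \<open>Iterations are indexed
from 0 (the paper indexes from 1; this is only a shift). The gradient of f
is the function Df, i.e. GDERIV f x :> Df x for all x.\<close>

definition backtracking_step ::
  "('a::real_inner \<Rightarrow> real) \<Rightarrow> real \<Rightarrow> real \<Rightarrow> real \<Rightarrow> 'a \<Rightarrow> 'a \<Rightarrow> real \<Rightarrow> bool" where
  "backtracking_step f \<beta> \<gamma> \<tau> xk dk tk \<longleftrightarrow>
     (if dk = 0 then tk = \<tau>
      else (let S = {t. (\<exists>j::nat. t = \<gamma> ^ j) \<and> f (xk + t *\<^sub>R dk) \<le> f xk - \<beta> * t * (norm dk)\<^sup>2}
            in tk \<in> S \<and> (\<forall>s\<in>S. s \<le> tk)))"

definition IRG_backtracking ::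
  "('a::real_inner \<Rightarrow> real) \<Rightarrow> ('a \<Rightarrow> 'a) \<Rightarrow> real \<Rightarrow> real \<Rightarrow> (nat \<Rightarrow> real)
   \<Rightarrow> real \<Rightarrow> real \<Rightarrow> real
   \<Rightarrow> (nat \<Rightarrow> 'a) \<Rightarrow> (nat \<Rightarrow> 'a) \<Rightarrow> (nat \<Rightarrow> real) \<Rightarrow> (nat \<Rightarrow> real)
   \<Rightarrow> (nat \<Rightarrow> 'a) \<Rightarrow> (nat \<Rightarrow> real) \<Rightarrow> bool" where
  "IRG_backtracking f Df \<mu> \<theta> \<rho> \<beta> \<gamma> \<tau> x g eps r d t \<longleftrightarrow>
     eps 0 > 0 \<and> r 0 > 0 \<and> 0 < \<mu> \<and> \<mu> < 1 \<and> 0 < \<theta> \<and> \<theta> < 1 \<and> (\<forall>k. \<rho> k > 0) \<and>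
     0 < \<beta> \<and> \<beta> < 1 \<and> 0 < \<gamma> \<and> \<gamma> < 1 \<and> 0 < \<tau> \<and> \<tau> < 1 \<and>
     (\<forall>k.
        norm (g k - Df (x k)) \<le> min (eps k) (\<rho> k) \<and>
        (if norm (g k) \<le> r k + eps k
         then r (Suc k) = \<mu> * r k \<and> eps (Suc k) = \<theta> * eps k \<and> d k = 0
         else r (Suc k) = r k \<and> eps (Suc k) = eps k \<and>
              d k = - ((norm (g k) - eps k) / norm (g k)) *\<^sub>R g k) \<and>
        t k > 0 \<and> backtracking_step f \<beta> \<gamma> \<tau> (x k) (d k) (t k) \<and>
        x (Suc k) = x k + t k *\<^sub>R d k)"

end

theory Submission imports Defs begin

text \<open>Near \<open>xbar\<close> the gradient is L-Lipschitz and bounded, so the descent lemma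
shows that the Armijo test succeeds for every step \<open>s \<le> m\<close>, with \<open>m > 0\<close>
depending only on \<open>\<beta>\<close>, L, the radius of the neighbourhood and the gradient bound.
The inexact direction is still a descent direction, \<open>\<nabla>f(x)\<bullet>d \<le> -\<parallel>d\<parallel>\<^sup>2\<close>, and not
longer than the gradient, so the test points stay in that neighbourhood.
Backtracking then accepts a step of at least \<open>\<gamma> min 1 m\<close>; the finitely many
indices of J before the iterates enter the neighbourhood have positive steps.\<close>

lemma has_real_derivative_along_line:
  assumes grad: "\<And>y. GDERIV f y :> Df y"
  shows "((\<lambda>u. f (x + u *\<^sub>R d)) has_real_derivative (Df (x + u *\<^sub>R d) \<bullet> d)) (at u)"
proof -
  have line: "((\<lambda>u. x + u *\<^sub>R d) has_derivative (\<lambda>h. h *\<^sub>R d)) (at u)"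
    by (auto intro!: derivative_eq_intros)
  have "(f has_derivative (\<lambda>h. h \<bullet> Df (x + u *\<^sub>R d))) (at (x + u *\<^sub>R d))"
    using grad[of "x + u *\<^sub>R d"] by (simp add: gderiv_def)
  from has_derivative_compose[OF line this]
  have "((\<lambda>u. f (x + u *\<^sub>R d)) has_derivative (\<lambda>h. (h *\<^sub>R d) \<bullet> Df (x + u *\<^sub>R d))) (at u)"
    by (simp add: o_def)
  then show ?thesis
    unfolding has_field_derivative_def
    by (rule has_derivative_subst) (auto simp: inner_commute mult.commute)
qed

lemma lipschitz_gradient_upper_bound:
  fixes f :: "'a::real_inner \<Rightarrow> real"
  assumes grad: "\<And>y. GDERIV f y :> Df y"
    and lip: "L-lipschitz_on U Df"
    and seg: "\<And>u. 0 \<le> u \<Longrightarrow> u \<le> s \<Longrightarrow> x + u *\<^sub>R d \<in> U"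
    and s: "0 \<le> s"
  shows "f (x + s *\<^sub>R d) \<le> f x + s * (Df x \<bullet> d) + L * s\<^sup>2 * (norm d)\<^sup>2 / 2"
proof -
  define \<phi> where "\<phi> u = f (x + u *\<^sub>R d) - u * (Df x \<bullet> d) - L * u\<^sup>2 * (norm d)\<^sup>2 / 2" for u
  have "\<phi> s \<le> \<phi> 0"
  proof (rule DERIV_nonpos_imp_nonincreasing[OF s])
    fix u assume u: "0 \<le> u" "u \<le> s"
    have deriv: "(\<phi> has_real_derivative
        (Df (x + u *\<^sub>R d) \<bullet> d - Df x \<bullet> d - L * (2 * u) * (norm d)\<^sup>2 / 2)) (at u)"
      unfolding \<phi>_def
      by (rule has_real_derivative_along_line[OF grad] derivative_eq_intros refl | simp)+
    have "norm (Df (x + u *\<^sub>R d) - Df x) \<le> L * norm (u *\<^sub>R d)"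
      using lipschitz_on_normD[OF lip seg[OF u] seg[of 0]] s by simp
    then have lip_u: "norm (Df (x + u *\<^sub>R d) - Df x) \<le> L * (u * norm d)"
      using u by simp
    have "Df (x + u *\<^sub>R d) \<bullet> d - Df x \<bullet> d = (Df (x + u *\<^sub>R d) - Df x) \<bullet> d"
      by (simp add: inner_diff_left)
    also have "\<dots> \<le> norm (Df (x + u *\<^sub>R d) - Df x) * norm d"
      by (rule norm_cauchy_schwarz)
    also have "\<dots> \<le> L * (u * norm d) * norm d"
      by (rule mult_right_mono[OF lip_u]) simp
    finally have "Df (x + u *\<^sub>R d) \<bullet> d - Df x \<bullet> d - L * (2 * u) * (norm d)\<^sup>2 / 2 \<le> 0"
      by (simp add: power2_eq_square algebra_simps)
    with deriv show "\<exists>y. (\<phi> has_real_derivative y) (at u) \<and> y \<le> 0" by blast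
  qed
  then show ?thesis by (simp add: \<phi>_def)
qed

lemma armijo_condition_small_step:
  fixes f :: "'a::real_inner \<Rightarrow> real"
  assumes grad: "\<And>y. GDERIV f y :> Df y"
    and lip: "L-lipschitz_on U Df"
    and seg: "\<And>u. 0 \<le> u \<Longrightarrow> u \<le> s \<Longrightarrow> x + u *\<^sub>R d \<in> U"
    and s: "0 \<le> s"
    and descent: "Df x \<bullet> d \<le> - (norm d)\<^sup>2"
    and small: "L * s \<le> 2 * (1 - \<beta>)"
  shows "f (x + s *\<^sub>R d) \<le> f x - \<beta> * s * (norm d)\<^sup>2"
proof -
  have first_order: "s * (Df x \<bullet> d) \<le> - (s * (norm d)\<^sup>2)"
    using mult_left_mono[OF descent s] by simp
  have "L * s\<^sup>2 * (norm d)\<^sup>2 / 2 = (L * s) * (s * (norm d)\<^sup>2) / 2"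
    by (simp add: power2_eq_square)
  also have "\<dots> \<le> (2 * (1 - \<beta>)) * (s * (norm d)\<^sup>2) / 2"
    using small s by (intro divide_right_mono mult_right_mono) auto
  also have "\<dots> = s * (norm d)\<^sup>2 - \<beta> * s * (norm d)\<^sup>2"
    by (simp add: field_simps)
  finally show ?thesis
    using lipschitz_gradient_upper_bound[OF grad lip seg s] first_order by linarith
qed

lemma backtracking_step_ge:
  assumes bt: "backtracking_step f \<beta> \<gamma> \<tau> x d t" and "d \<noteq> 0"
    and \<gamma>: "0 < \<gamma>" "\<gamma> < 1" and m: "0 < m"
    and armijo: "\<And>s. 0 < s \<Longrightarrow> s \<le> m \<Longrightarrow> f (x + s *\<^sub>R d) \<le> f x - \<beta> * s * (norm d)\<^sup>2"
  shows "\<gamma> * min 1 m \<le> t"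
proof -
  define S where "S = {t. (\<exists>j::nat. t = \<gamma> ^ j) \<and> f (x + t *\<^sub>R d) \<le> f x - \<beta> * t * (norm d)\<^sup>2}"
  have "t \<in> S" and t_max: "\<forall>s\<in>S. s \<le> t"
    using bt \<open>d \<noteq> 0\<close> unfolding backtracking_step_def S_def Let_def by auto
  then obtain j where t: "t = \<gamma> ^ j" by (auto simp: S_def)
  show ?thesis
  proof (cases j)
    case 0
    then show ?thesis using t \<gamma> m by (simp add: mult_le_one)
  next
    case (Suc i)
    have "m < \<gamma> ^ i"
    proof (rule ccontr)
      assume "\<not> m < \<gamma> ^ i"
      then have "\<gamma> ^ i \<in> S" using armijo \<gamma> by (auto simp: S_def)
      then have "\<gamma> ^ i \<le> \<gamma> * \<gamma> ^ i" using t_max t Suc by auto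
      then show False using \<gamma> by simp
    qed
    then have "\<gamma> * m \<le> t" using t Suc \<gamma> by simp
    moreover have "\<gamma> * min 1 m \<le> \<gamma> * m" using \<gamma> by (simp add: mult_left_mono)
    ultimately show ?thesis by linarith
  qed
qed

lemma
  fixes g G :: "'a::real_inner"
  assumes err: "norm (g - G) \<le> e" and big: "e < norm g"
    and d: "d = - ((norm g - e) / norm g) *\<^sub>R g"
  shows norm_inexact_direction: "norm d = norm g - e"
    and norm_inexact_direction_le: "norm d \<le> norm G"
    and inexact_direction_descent: "G \<bullet> d \<le> - (norm d)\<^sup>2"
proof -
  have "0 \<le> e" using err norm_ge_zero order_trans by blast
  then have g_pos: "0 < norm g" using big by linarith
  then show norm_d: "norm d = norm g - e" using big by (simp add: d)
  show "norm d \<le> norm G"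
    using norm_d err norm_triangle_ineq2[of g G] by linarith
  have "(G - g) \<bullet> d \<le> norm (G - g) * norm d" by (rule norm_cauchy_schwarz)
  also have "\<dots> \<le> e * norm d" using err by (intro mult_right_mono) (auto simp: norm_minus_commute)
  finally have "G \<bullet> d \<le> g \<bullet> d + e * norm d" by (simp add: inner_diff_left)
  moreover have "g \<bullet> d = - ((norm g - e) * norm g)"
    using g_pos by (simp add: d power2_norm_eq_inner[symmetric] power2_eq_square)
  ultimately show "G \<bullet> d \<le> - (norm d)\<^sup>2"
    by (simp add: norm_d power2_eq_square algebra_simps)
qed

lemma lipschitz_on_ball_norm_bound:
  fixes F :: "'a::real_normed_vector \<Rightarrow> 'b::real_normed_vector"
  assumes lip: "L-lipschitz_on (ball a \<delta>) F" and y: "y \<in> ball a \<delta>"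
  shows "norm (F y) \<le> norm (F a) + L * \<delta>"
proof -
  have a: "a \<in> ball a \<delta>" using y by (auto intro: le_less_trans[OF zero_le_dist])
  have "norm (F y - F a) \<le> L * norm (y - a)" by (rule lipschitz_on_normD[OF lip y a])
  also have "\<dots> \<le> L * \<delta>"
    using y lipschitz_on_nonneg[OF lip] by (intro mult_left_mono) (auto simp: dist_norm norm_minus_commute)
  finally show ?thesis using norm_triangle_ineq2[of "F y" "F a"] by linarith
qed

lemma inexact_backtracking_step_ge:
  fixes f :: "'a::real_inner \<Rightarrow> real"
  assumes grad: "\<And>y. GDERIV f y :> Df y"
    and lip: "L-lipschitz_on (ball a \<delta>) Df" and L: "0 < L"
    and bound: "\<And>y. y \<in> ball a \<delta> \<Longrightarrow> norm (Df y) \<le> M"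
    and x: "dist x a < \<delta> / 2"
    and err: "norm (g - Df x) \<le> e" and big: "e < norm g"
    and d: "d = - ((norm g - e) / norm g) *\<^sub>R g"
    and bt: "backtracking_step f \<beta> \<gamma> \<tau> x d t"
    and \<beta>: "\<beta> < 1" and \<gamma>: "0 < \<gamma>" "\<gamma> < 1"
  shows "\<gamma> * min 1 (min (2 * (1 - \<beta>) / L) (\<delta> / (2 * (M + 1)))) \<le> t"
proof -
  have "dist a x < \<delta> / 2" using x by (simp add: dist_commute)
  then have x_in: "x \<in> ball a \<delta>" unfolding mem_ball using zero_le_dist[of a x] by linarith
  have norm_d: "norm d \<le> M"
    using norm_inexact_direction_le[OF err big d] bound[OF x_in] by linarith
  have M: "0 \<le> M" using bound[OF x_in] norm_ge_zero order_trans by blast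
  have \<delta>: "0 < \<delta>" using x_in zero_le_dist[of a x] unfolding mem_ball by linarith
  have "d \<noteq> 0" using norm_inexact_direction[OF err big d] big by auto
  then show ?thesis
  proof (rule backtracking_step_ge[OF bt _ \<gamma>])
    show "0 < min (2 * (1 - \<beta>) / L) (\<delta> / (2 * (M + 1)))" using \<beta> L \<delta> M by simp
    fix s assume s: "0 < s" "s \<le> min (2 * (1 - \<beta>) / L) (\<delta> / (2 * (M + 1)))"
    then have "L * s \<le> 2 * (1 - \<beta>)" and s_M: "s * (M + 1) \<le> \<delta> / 2"
      using L M by (auto simp: field_simps)
    have seg: "x + u *\<^sub>R d \<in> ball a \<delta>" if "0 \<le> u" "u \<le> s" for u
    proof -
      have "u * norm d \<le> s * (M + 1)" using that norm_d M by (intro mult_mono) auto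
      then have "dist x (x + u *\<^sub>R d) \<le> \<delta> / 2" using that s_M by (simp add: dist_norm)
      then show ?thesis using x dist_triangle[of a "x + u *\<^sub>R d" x] by (simp add: dist_commute)
    qed
    show "f (x + s *\<^sub>R d) \<le> f x - \<beta> * s * (norm d)\<^sup>2"
      by (rule armijo_condition_small_step[OF grad lip seg _ _ \<open>L * s \<le> 2 * (1 - \<beta>)\<close>])
         (use s inexact_direction_descent[OF err big d] in auto)
  qed
qed

lemma IRG_backtracking_radius_pos:
  assumes "IRG_backtracking f Df \<mu> \<theta> \<rho> \<beta> \<gamma> \<tau> x g eps r d t"
  shows "0 < r k"
proof (induction k)
  case (Suc k)
  have "0 < \<mu>" and "if norm (g k) \<le> r k + eps k then r (Suc k) = \<mu> * r k else r (Suc k) = r k"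
    using assms unfolding IRG_backtracking_def by (metis (full_types))+
  with Suc show ?case by (simp split: if_splits)
qed (use assms in \<open>simp add: IRG_backtracking_def\<close>)

lemma IRG_backtracking_nonzero_direction:
  assumes alg: "IRG_backtracking f Df \<mu> \<theta> \<rho> \<beta> \<gamma> \<tau> x g eps r d t" and "d k \<noteq> 0"
  shows "eps k < norm (g k)" and "d k = - ((norm (g k) - eps k) / norm (g k)) *\<^sub>R g k"
proof -
  have "\<not> norm (g k) \<le> r k + eps k"
    and "d k = - ((norm (g k) - eps k) / norm (g k)) *\<^sub>R g k"
    using alg \<open>d k \<noteq> 0\<close> unfolding IRG_backtracking_def by (metis (full_types))+
  then show "eps k < norm (g k)" and "d k = - ((norm (g k) - eps k) / norm (g k)) *\<^sub>R g k"
    using IRG_backtracking_radius_pos[OF alg, of k] by auto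
qed

lemma INF_pos_if_eventually_ge:
  fixes t :: "nat \<Rightarrow> real"
  assumes "J \<noteq> {}" and pos: "\<And>k. k \<in> J \<Longrightarrow> 0 < t k" and c: "0 < c"
    and late: "\<And>k. k \<in> J \<Longrightarrow> N \<le> k \<Longrightarrow> c \<le> t k"
  shows "0 < (INF k\<in>J. t k)"
proof -
  define b where "b = Min (insert c (t ` {k\<in>J. k < N}))"
  have fin: "finite (insert c (t ` {k\<in>J. k < N}))" by simp
  have "0 < b" unfolding b_def using fin c pos by (subst Min_gr_iff) auto
  moreover have "b \<le> t k" if "k \<in> J" for k
  proof (cases "N \<le> k")
    case True
    have "b \<le> c" unfolding b_def using fin by (intro Min_le) auto
    then show ?thesis using late[OF that True] by linarith
  next
    case False
    then show ?thesis unfolding b_def using fin that by (intro Min_le) auto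
  qed
  then have "b \<le> (INF k\<in>J. t k)" using \<open>J \<noteq> {}\<close> by (intro cINF_greatest) auto
  ultimately show ?thesis by linarith
qed

lemma IRG_backtracking_stepsize_ge:
  fixes f :: "'a::real_inner \<Rightarrow> real"
  assumes grad: "\<And>y. GDERIV f y :> Df y"
    and alg: "IRG_backtracking f Df \<mu> \<theta> \<rho> \<beta> \<gamma> \<tau> x g eps r d t"
    and lip: "L-lipschitz_on (ball a \<delta>) Df" and L: "0 < L"
    and bound: "\<And>y. y \<in> ball a \<delta> \<Longrightarrow> norm (Df y) \<le> M"
    and near: "dist (x k) a < \<delta> / 2"
  shows "min \<tau> (\<gamma> * min 1 (min (2 * (1 - \<beta>) / L) (\<delta> / (2 * (M + 1))))) \<le> t k"
proof (cases "d k = 0")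
  case True
  then show ?thesis using alg by (simp add: IRG_backtracking_def backtracking_step_def)
next
  case False
  from alg have "norm (g k - Df (x k)) \<le> eps k" "backtracking_step f \<beta> \<gamma> \<tau> (x k) (d k) (t k)"
    and "\<beta> < 1" "0 < \<gamma>" "\<gamma> < 1"
    by (auto simp: IRG_backtracking_def)
  from inexact_backtracking_step_ge[OF grad lip L bound near this(1)
      IRG_backtracking_nonzero_direction[OF alg False] this(2-)]
  show ?thesis by simp
qed

theorem mainTheorem15:
  fixes f :: "'a::euclidean_space \<Rightarrow> real" and Df :: "'a \<Rightarrow> 'a"
    and x g d :: "nat \<Rightarrow> 'a" and eps r t \<rho> :: "nat \<Rightarrow> real"
    and \<mu> \<theta> \<beta> \<gamma> \<tau> :: real and J :: "nat set" and xbar :: 'a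
  assumes grad: "\<And>y. GDERIV f y :> Df y"
    and cont: "continuous_on UNIV Df"
    and alg: "IRG_backtracking f Df \<mu> \<theta> \<rho> \<beta> \<gamma> \<tau> x g eps r d t"
    and rho_lim: "\<rho> \<longlonglongrightarrow> 0"
    and J_inf: "infinite J"
    and conv: "\<forall>e>0. \<exists>N. \<forall>k\<in>J. N \<le> k \<longrightarrow> dist (x k) xbar < e"
    and lip: "\<exists>\<delta>>0. \<exists>L. L-lipschitz_on (ball xbar \<delta>) Df"
  shows "(INF k\<in>J. t k) > 0"
proof -
  obtain \<delta> L0 where \<delta>: "0 < \<delta>" and lip0: "L0-lipschitz_on (ball xbar \<delta>) Df" using lip by blast
  define L where "L = L0 + 1"
  have L: "0 < L" using lipschitz_on_nonneg[OF lip0] by (simp add: L_def)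
  have lipL: "L-lipschitz_on (ball xbar \<delta>) Df" using lip0 by (rule lipschitz_on_le) (simp add: L_def)
  define M where "M = norm (Df xbar) + L * \<delta>"
  have M: "0 \<le> M" using L \<delta> by (simp add: M_def)
  obtain N where N: "\<forall>k\<in>J. N \<le> k \<longrightarrow> dist (x k) xbar < \<delta> / 2" using conv \<delta> by (meson half_gt_zero)
  define c where "c = min \<tau> (\<gamma> * min 1 (min (2 * (1 - \<beta>) / L) (\<delta> / (2 * (M + 1)))))"
  have params: "0 < \<tau>" "\<beta> < 1" "0 < \<gamma>" "\<forall>k. 0 < t k"
    using alg by (auto simp: IRG_backtracking_def)
  show ?thesis
  proof (rule INF_pos_if_eventually_ge)
    show "J \<noteq> {}" using J_inf by auto
    show "0 < c" using params L \<delta> M by (simp add: c_def)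
    show "c \<le> t k" if "k \<in> J" "N \<le> k" for k
      unfolding c_def using N that IRG_backtracking_stepsize_ge[OF grad alg lipL L
        lipschitz_on_ball_norm_bound[OF lipL, folded M_def]] by blast
  qed (use params in auto)
qed

end
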